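(* Let $Q_{22}\in\mathbb{S}_q$ with $Q_{22}\succ0$ and $\Xi\in\mathbb{A}_q$. Then the self-adjoint linear operator $X\mapsto Q_{22}X-\Xi XJ_2$ on $\mathbb{R}^{q\times m_2}$ (equipped with the Frobenius inner product), which is the second Fréchet derivative $\partial_b^2\mathcal{L}$ of the Lagrange function with respect to $b$, is positive definite if and only if $\rho(Q_{22}^{-1}\Xi)<1$.
   Context: $\mathbb{S}_k$ and $\mathbb{A}_k$ denote the spaces of real symmetric and real antisymmetric $k\times k$ matrices; $\rho(\cdot)$ is the spectral radius. $m_2$ is even, $\mu_2=m_2/2$, $J_2:=\begin{bmatrix}0&I_{\mu_2}\\-I_{\mu_2}&0\end{bmatrix}$. (For the identification with $\partial_b^2\mathcal L$: $\mathcal L$ depends on $b$ through $\mathcal E$, whose $b$-derivative is $Q_{22}b$, and through the term $\frac12\langle\Xi,bJ_2b^{T}\rangle+\langle\Gamma,bJ_2d^T\rangle$, with $Q_{22}$ the lower-right $q\times q$ block of the observability Gramian, which does not depend on $b$.) *)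

theory Defs
  imports "HOL-Analysis.Analysis"
begin

text \<open>Columns of matrices in R^(q x m2) are indexed by 'mu + 'mu, so m2 = 2 mu is even.
  J2 = [[0, I],[-I, 0]] in this block indexing.\<close>
definition J2 :: "real ^ ('mu::finite + 'mu) ^ ('mu + 'mu)" where
  "J2 = (\<chi> a b. case (a, b) of
            (Inl i, Inr j) \<Rightarrow> (if i = j then 1 else 0)
          | (Inr i, Inl j) \<Rightarrow> (if i = j then -1 else 0)
          | _ \<Rightarrow> 0)"

definition sym_mat :: "real ^ 'n ^ 'n \<Rightarrow> bool" where
  "sym_mat A \<longleftrightarrow> transpose A = A"

definition antisym_mat :: "real ^ 'n ^ 'n \<Rightarrow> bool" where
  "antisym_mat A \<longleftrightarrow> transpose A = - A"

definition pos_def_mat :: "real ^ 'n ^ 'n \<Rightarrow> bool" where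
  "pos_def_mat A \<longleftrightarrow> (\<forall>x. x \<noteq> 0 \<longrightarrow> x \<bullet> (A *v x) > 0)"

definition frob :: "real ^ 'c ^ 'r \<Rightarrow> real ^ 'c ^ 'r \<Rightarrow> real" where
  "frob X Y = (\<Sum>i\<in>UNIV. \<Sum>j\<in>UNIV. X $ i $ j * Y $ i $ j)"

definition cmat :: "real ^ 'n ^ 'n \<Rightarrow> complex ^ 'n ^ 'n" where
  "cmat A = (\<chi> i j. complex_of_real (A $ i $ j))"

definition eigenvalues_c :: "real ^ 'n ^ 'n \<Rightarrow> complex set" where
  "eigenvalues_c A = {z. \<exists>v :: complex ^ 'n. v \<noteq> 0 \<and> cmat A *v v = z *s v}"

definition spec_rad :: "real ^ 'n ^ 'n \<Rightarrow> real" where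
  "spec_rad A = Max (cmod ` eigenvalues_c A)"

definition self_adjoint_frob :: "(real ^ 'c ^ 'r \<Rightarrow> real ^ 'c ^ 'r) \<Rightarrow> bool" where
  "self_adjoint_frob L \<longleftrightarrow> (\<forall>X Y. frob (L X) Y = frob X (L Y))"

definition pos_def_op :: "(real ^ 'c ^ 'r \<Rightarrow> real ^ 'c ^ 'r) \<Rightarrow> bool" where
  "pos_def_op L \<longleftrightarrow> (\<forall>X. X \<noteq> 0 \<longrightarrow> frob X (L X) > 0)"

end

theory Submission
  imports Defs
begin

(* Write L = P - T with P X = Q22 X and T X = Xi X J2; both are self-adjoint for the
   Frobenius inner product and P is positive definite.  The generalized Rayleigh quotient
   <X, T X> / <X, P X> attains its maximum lam at some X0, and lam P - T, being positive
   semidefinite with <X0, (lam P - T) X0> = 0, annihilates X0; read column by column, this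
   says that i lam is an eigenvalue of Q22^-1 Xi.  Conversely, since Xi is antisymmetric every
   eigenvalue of Q22^-1 Xi is purely imaginary, and evaluating the Rayleigh bound on matrices
   built from the real and imaginary part of an eigenvector bounds its modulus by lam.  Hence
   the spectral radius of Q22^-1 Xi equals lam, whereas L is positive definite iff lam < 1. *)

section \<open>Matrices and the Frobenius inner product\<close>

lemma frob_eq_inner: "frob X Y = X \<bullet> Y"
  by (simp add: frob_def inner_vec_def)

lemma column_scaleR: "column c (r *\<^sub>R X) = r *\<^sub>R column c X"
  by (simp add: vec_eq_iff column_def)

lemma column_matrix_mult: "column c (A ** X) = A *v column c X"
  by (simp add: vec_eq_iff column_def matrix_matrix_mult_def matrix_vector_mult_def)

lemma row_matrix_mult: "(X ** B) $ i = X $ i v* B"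
  by (simp add: vec_eq_iff matrix_matrix_mult_def vector_matrix_mult_def)

lemma matrix_vector_mult_uminus_left: "(- A) *v x = - (A *v (x::'a::comm_ring_1^'n))"
  by (simp add: vec_eq_iff matrix_vector_mult_def sum_negf)

lemma matrix_vector_mult_uminus_right: "A *v (- x) = - (A *v (x::'a::comm_ring_1^'n))"
  by (simp add: vec_eq_iff matrix_vector_mult_def sum_negf)

lemma matrix_mult_uminus_left: "(- A) ** (B::'a::comm_ring_1^'n^'m) = - (A ** B)"
  by (simp add: vec_eq_iff matrix_matrix_mult_def sum_negf)

lemma matrix_mult_uminus_right: "A ** (- B::'a::comm_ring_1^'n^'m) = - (A ** B)"
  by (simp add: vec_eq_iff matrix_matrix_mult_def sum_negf)

lemma linear_matrix_mult_left: "linear (\<lambda>X::real^'c^'n. A ** X)"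
  by (rule linearI) (simp_all add: matrix_add_ldistrib matrix_scalar_ac scalar_matrix_assoc[symmetric])

lemma linear_matrix_mult_right: "linear (\<lambda>X::real^'n^'m. X ** B)"
  by (rule linearI) (simp_all add: vec_eq_iff matrix_matrix_mult_def sum.distrib algebra_simps sum_distrib_left)

lemma inner_matrix_vector_mult_left:
  fixes A :: "real^'n^'m"
  shows "(A *v x) \<bullet> y = x \<bullet> (transpose A *v y)"
  by (metis dot_lmul_matrix transpose_matrix_vector transpose_transpose)

lemma inner_eq_sum_columns: "(X::real^'c^'n) \<bullet> Y = (\<Sum>c\<in>UNIV. column c X \<bullet> column c Y)"
  by (simp add: inner_vec_def column_def) (rule sum.swap)

lemma inner_matrix_mult_left:
  fixes A :: "real^'n^'m" and X :: "real^'c^'n"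
  shows "(A ** X) \<bullet> Y = X \<bullet> (transpose A ** Y)"
  by (simp add: inner_eq_sum_columns column_matrix_mult inner_matrix_vector_mult_left)

lemma inner_matrix_mult_right:
  fixes B :: "real^'d^'c" and X :: "real^'c^'n"
  shows "(X ** B) \<bullet> Y = X \<bullet> (Y ** transpose B)"
  unfolding inner_vec_def[of "X ** B"] inner_vec_def[of X] row_matrix_mult dot_lmul_matrix
    row_matrix_mult[of Y] vector_transpose_matrix ..

lemma sym_mat_inner_commute: "sym_mat Q \<Longrightarrow> a \<bullet> (Q *v b) = b \<bullet> (Q *v (a::real^'n))"
  unfolding sym_mat_def by (metis inner_commute inner_matrix_vector_mult_left)

lemma antisym_mat_inner_self: "antisym_mat Xi \<Longrightarrow> a \<bullet> (Xi *v a) = (0::real)"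
  using inner_matrix_vector_mult_left[of Xi a a]
  unfolding antisym_mat_def by (simp add: inner_commute matrix_vector_mult_uminus_left)

lemma pos_def_mat_inner_mult_pos:
  assumes "pos_def_mat Q" and "X \<noteq> 0"
  shows "X \<bullet> (Q ** X) > 0"
proof -
  have nonneg: "0 \<le> column c X \<bullet> (Q *v column c X)" for c
    using assms(1) unfolding pos_def_mat_def by (metis inner_zero_left order.strict_implies_order order_refl)
  obtain c where "column c X \<noteq> 0"
    using assms(2) by (auto simp: vec_eq_iff column_def)
  then have "0 < column c X \<bullet> (Q *v column c X)"
    using assms(1) unfolding pos_def_mat_def by blast
  then show ?thesis
    unfolding inner_eq_sum_columns[of X] column_matrix_mult
    by (intro sum_pos2[of UNIV c]) (simp_all add: nonneg)
qed

lemma pos_def_mat_cancel: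
  assumes "pos_def_mat Q" and "Q *v x = Q *v y"
  shows "x = y"
proof -
  have "(x - y) \<bullet> (Q *v (x - y)) = 0"
    using assms(2) by (simp add: matrix_vector_mult_diff_distrib)
  then show ?thesis using assms(1) unfolding pos_def_mat_def by (metis eq_iff_diff_eq_0 less_irrefl)
qed

lemma pos_def_mat_inner_add_pos:
  assumes "pos_def_mat Q" and "a \<noteq> 0 \<or> b \<noteq> 0"
  shows "a \<bullet> (Q *v a) + b \<bullet> (Q *v b) > 0"
  using assms unfolding pos_def_mat_def
  by (metis add_nonneg_pos add_pos_nonneg inner_zero_left order_less_imp_le order_refl)

lemma pos_def_mat_mult_matrix_inv:
  assumes "pos_def_mat Q"
  shows "Q ** matrix_inv Q = mat 1"
proof -
  have "\<exists>B. B ** Q = mat 1"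
    unfolding matrix_left_invertible_ker using assms unfolding pos_def_mat_def by force
  then have "invertible Q" by (simp add: invertible_left_inverse)
  then show ?thesis
    unfolding invertible_def matrix_inv_def by (rule conjunct1[OF someI_ex])
qed

section \<open>Maximising a generalized Rayleigh quotient\<close>

lemma self_adjoint_psd_kernel:
  fixes f :: "'a::real_inner \<Rightarrow> 'a"
  assumes lin: "linear f" and sa: "\<And>x y. f x \<bullet> y = x \<bullet> f y"
    and psd: "\<And>x. x \<bullet> f x \<ge> 0" and zero: "x \<bullet> f x = 0"
  shows "f x = 0"
proof -
  define a where "a = f x \<bullet> f x"
  define c where "c = f x \<bullet> f (f x)"
  have "c \<ge> 0" unfolding c_def by (rule psd)
  have bound: "2 * a \<le> t * c" if "t > 0" for t
  proof -
    have "0 \<le> (x - t *\<^sub>R f x) \<bullet> f (x - t *\<^sub>R f x)" by (rule psd)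
    also have "\<dots> = t * (t * c - 2 * a)"
      using sa[of x "f x"] zero
      by (simp add: linear_diff[OF lin] linear_scale[OF lin] inner_diff_left inner_diff_right
          a_def c_def algebra_simps)
    finally show ?thesis using that by (simp add: zero_le_mult_iff)
  qed
  have "a \<le> 0"
  proof (rule ccontr)
    assume "\<not> a \<le> 0"
    then have "2 * a \<le> a / (c + 1) * c" using \<open>c \<ge> 0\<close> by (intro bound) simp
    also have "\<dots> \<le> a" using \<open>\<not> a \<le> 0\<close> \<open>c \<ge> 0\<close> by (simp add: field_simps)
    finally show False using \<open>\<not> a \<le> 0\<close> by simp
  qed
  then show ?thesis unfolding a_def by (metis inner_eq_zero_iff inner_ge_zero order_antisym)
qed

lemma rayleigh_quotient_attains_max:
  fixes P T :: "'a::euclidean_space \<Rightarrow> 'a"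
  assumes lP: "linear P" and lT: "linear T" and pd: "\<And>x. x \<noteq> 0 \<Longrightarrow> x \<bullet> P x > 0"
  obtains x0 lam where "x0 \<noteq> 0" "x0 \<bullet> T x0 = lam * (x0 \<bullet> P x0)"
    "\<And>y. y \<bullet> T y \<le> lam * (y \<bullet> P y)"
proof -
  define r where "r x = (x \<bullet> T x) / (x \<bullet> P x)" for x
  have "continuous_on S P" "continuous_on S T" for S
    using lP lT by (simp_all add: linear_continuous_on linear_conv_bounded_linear)
  moreover have "x \<bullet> P x \<noteq> 0" if "x \<in> sphere 0 1" for x
    using pd[of x] that by fastforce
  ultimately have "continuous_on (sphere 0 1) r"
    unfolding r_def by (auto intro!: continuous_intros)
  moreover obtain b :: 'a where "b \<in> Basis" using nonempty_Basis by blast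
  then have "sphere (0::'a) 1 \<noteq> {}" by (auto simp: norm_Basis)
  ultimately obtain x0 where x0: "x0 \<in> sphere 0 1" and max: "\<And>y. y \<in> sphere 0 1 \<Longrightarrow> r y \<le> r x0"
    using continuous_attains_sup[OF compact_sphere] by blast
  have bound: "y \<bullet> T y \<le> r x0 * (y \<bullet> P y)" for y
  proof (cases "y = 0")
    case True
    then show ?thesis by (simp add: linear_0[OF lT] linear_0[OF lP])
  next
    case False
    have "r y = r (y /\<^sub>R norm y)"
      using False by (simp add: r_def linear_scale[OF lP] linear_scale[OF lT])
    also have "\<dots> \<le> r x0" using False by (intro max) simp
    finally show ?thesis using pd[OF False] by (simp add: r_def divide_le_eq)
  qed
  have "x0 \<noteq> 0" using x0 by auto
  moreover from this have "x0 \<bullet> T x0 = r x0 * (x0 \<bullet> P x0)"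
    using pd[of x0] by (simp add: r_def)
  ultimately show thesis using bound by (rule that)
qed

lemma generalized_rayleigh_max:
  fixes P T :: "'a::euclidean_space \<Rightarrow> 'a"
  assumes lP: "linear P" and lT: "linear T"
    and saP: "\<And>x y. P x \<bullet> y = x \<bullet> P y" and saT: "\<And>x y. T x \<bullet> y = x \<bullet> T y"
    and pd: "\<And>x. x \<noteq> 0 \<Longrightarrow> x \<bullet> P x > 0"
  obtains x0 lam where "x0 \<noteq> 0" "T x0 = lam *\<^sub>R P x0" "\<And>y. y \<bullet> T y \<le> lam * (y \<bullet> P y)"
proof -
  obtain x0 lam where "x0 \<noteq> 0" and attained: "x0 \<bullet> T x0 = lam * (x0 \<bullet> P x0)"
    and bound: "\<And>y. y \<bullet> T y \<le> lam * (y \<bullet> P y)"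
    using rayleigh_quotient_attains_max[OF lP lT pd] by blast
  have "lam *\<^sub>R P x0 - T x0 = 0"
  proof (rule self_adjoint_psd_kernel[where f = "\<lambda>x. lam *\<^sub>R P x - T x"])
    show "linear (\<lambda>x. lam *\<^sub>R P x - T x)"
      using lP lT by (intro linear_compose_sub linear_compose_scale_right)
    show "(lam *\<^sub>R P x - T x) \<bullet> y = x \<bullet> (lam *\<^sub>R P y - T y)" for x y
      by (simp add: inner_diff_left inner_diff_right saP saT)
    show "0 \<le> x \<bullet> (lam *\<^sub>R P x - T x)" for x
      using bound[of x] by (simp add: inner_diff_right)
    show "x0 \<bullet> (lam *\<^sub>R P x0 - T x0) = 0"
      using attained by (simp add: inner_diff_right)
  qed
  with \<open>x0 \<noteq> 0\<close> bound show thesis by (intro that) auto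
qed

lemma rayleigh_max_lt_1_iff:
  fixes P T :: "'a::real_inner \<Rightarrow> 'a"
  assumes pd: "\<And>x. x \<noteq> 0 \<Longrightarrow> x \<bullet> P x > 0"
    and "x0 \<noteq> 0" and eigen: "T x0 = lam *\<^sub>R P x0" and bound: "\<And>y. y \<bullet> T y \<le> lam * (y \<bullet> P y)"
  shows "(\<forall>x. x \<noteq> 0 \<longrightarrow> x \<bullet> (P x - T x) > 0) \<longleftrightarrow> lam < 1"
proof
  assume "\<forall>x. x \<noteq> 0 \<longrightarrow> x \<bullet> (P x - T x) > 0"
  then have "0 < x0 \<bullet> (P x0 - T x0)" using \<open>x0 \<noteq> 0\<close> by blast
  also have "\<dots> = (1 - lam) * (x0 \<bullet> P x0)" by (simp add: eigen inner_diff_right algebra_simps)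
  finally show "lam < 1" using pd[OF \<open>x0 \<noteq> 0\<close>] by (simp add: zero_less_mult_iff)
next
  assume "lam < 1"
  have "x \<bullet> T x < x \<bullet> P x" if "x \<noteq> 0" for x
    using bound[of x] pd[OF that] \<open>lam < 1\<close>
    by (smt (verit, best) mult_less_cancel_right2)
  then show "\<forall>x. x \<noteq> 0 \<longrightarrow> x \<bullet> (P x - T x) > 0" by (simp add: inner_diff_right)
qed

section \<open>Complex eigenvalues of real matrices\<close>

lemma matrix_vector_mult_sum_scale:
  "(B::'a::comm_ring_1^'n^'m) *v (\<Sum>z\<in>F. c z *s v z) = (\<Sum>z\<in>F. c z *s (B *v v z))"
  by (simp add: vec_eq_iff matrix_vector_mult_def sum_component sum_distrib_left mult_ac)
    (intro allI sum.swap)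

lemma eigenvectors_distinct_independent:
  fixes B :: "'a::field^'n^'n"
  assumes "finite F" and "\<And>z. z \<in> F \<Longrightarrow> v z \<noteq> 0 \<and> B *v v z = z *s v z"
    and "(\<Sum>z\<in>F. c z *s v z) = 0"
  shows "\<forall>z\<in>F. c z = 0"
  using assms
proof (induction F arbitrary: c rule: finite_induct)
  case empty
  then show ?case by simp
next
  case (insert w F)
  have sum0: "(\<Sum>z\<in>F. c z *s v z) + c w *s v w = 0"
    using insert.prems(2) insert.hyps by (simp add: add.commute)
  have "B *v ((\<Sum>z\<in>F. c z *s v z) + c w *s v w) = 0"
    using sum0 by simp
  then have applied: "(\<Sum>z\<in>F. (c z * z) *s v z) + (c w * w) *s v w = 0"
    using insert.prems(1)
    by (simp add: matrix_vector_right_distrib matrix_vector_mult_sum_scale vec.scale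
        vector_smult_assoc mult_ac cong: sum.cong)
  have scaled: "(\<Sum>z\<in>F. (c z * w) *s v z) + (c w * w) *s v w = 0"
    using arg_cong[OF sum0, of "(*s) w"]
    by (simp add: vector_ssub_ldistrib vec.scale_sum_right vector_smult_assoc vector_sadd_rdistrib
        vec.scale_right_distrib mult_ac)
  have "(\<Sum>z\<in>F. (c z * (z - w)) *s v z) = 0"
    using arg_cong2[OF applied scaled, of "(-)"]
    by (simp add: sum_subtractf[symmetric] algebra_simps vec.scale_left_diff_distrib)
  then have "\<forall>z\<in>F. c z * (z - w) = 0"
    using insert.IH[of "\<lambda>z. c z * (z - w)"] insert.prems(1) by blast
  then have "\<forall>z\<in>F. c z = 0" using insert.hyps(2) by auto
  moreover from this have "c w *s v w = 0" using sum0 by simp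
  then have "c w = 0" using insert.prems(1)[of w] by (simp add: vec.scale_eq_0_iff)
  ultimately show ?case by simp
qed

lemma finite_eigenvalues:
  fixes B :: "'a::field^'n^'n"
  shows "finite {z. \<exists>v. v \<noteq> 0 \<and> B *v v = z *s v}"
proof -
  define S where "S = {z. \<exists>v. v \<noteq> 0 \<and> B *v v = z *s v}"
  define v where "v z = (SOME v. v \<noteq> 0 \<and> B *v v = z *s v)" for z
  have v: "v z \<noteq> 0 \<and> B *v v z = z *s v z" if "z \<in> S" for z
    using that someI_ex[of "\<lambda>v. v \<noteq> 0 \<and> B *v v = z *s v"] unfolding S_def v_def by simp
  have inj: "inj_on v S"
  proof (rule inj_onI)
    fix z1 z2 assume z: "z1 \<in> S" "z2 \<in> S" and eq: "v z1 = v z2"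
    have "z1 *s v z1 = B *v v z1" using v[OF z(1)] by simp
    also have "\<dots> = z2 *s v z1" using v[OF z(2)] unfolding eq by simp
    finally show "z1 = z2" using v[OF z(1)] vec.scale_right_imp_eq by blast
  qed
  have "vec.independent (v ` S)"
    unfolding vec.independent_explicit_finite_subsets
  proof (intro allI impI ballI)
    fix T c x assume T: "T \<subseteq> v ` S" "finite T" and sum0: "(\<Sum>x\<in>T. c x *s x) = 0" and "x \<in> T"
    define F where "F = {z \<in> S. v z \<in> T}"
    have TF: "T = v ` F" using T(1) unfolding F_def by auto
    have injF: "inj_on v F" using inj unfolding F_def by (auto intro: inj_on_subset)
    have "finite F" using T(2) TF injF by (simp add: finite_image_iff)
    moreover have "v z \<noteq> 0 \<and> B *v v z = z *s v z" if "z \<in> F" for z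
      using v that unfolding F_def by blast
    moreover have "(\<Sum>z\<in>F. c (v z) *s v z) = 0"
      using sum0 unfolding TF sum.reindex[OF injF] by simp
    ultimately have "\<forall>z\<in>F. c (v z) = 0"
      by (rule eigenvectors_distinct_independent)
    then show "c x = 0" using \<open>x \<in> T\<close> TF by auto
  qed
  then have "finite (v ` S)" by (rule vec.finiteI_independent)
  then show ?thesis using inj unfolding S_def[symmetric] by (simp add: finite_image_iff)
qed

lemma eigenvalues_c_real_parts:
  assumes "z \<in> eigenvalues_c M"
  obtains a b where "a \<noteq> 0 \<or> b \<noteq> 0"
    "M *v a = Re z *\<^sub>R a - Im z *\<^sub>R b" "M *v b = Re z *\<^sub>R b + Im z *\<^sub>R a"
proof -
  obtain v where v: "v \<noteq> 0" "cmat M *v v = z *s v"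
    using assms unfolding eigenvalues_c_def by auto
  define a where "a = (\<chi> i. Re (v $ i))"
  define b where "b = (\<chi> i. Im (v $ i))"
  have c: "(cmat M *v v) $ i = (z *s v) $ i" for i using v(2) by simp
  have "a \<noteq> 0 \<or> b \<noteq> 0" using v(1) by (auto simp: a_def b_def vec_eq_iff complex_eq_iff)
  moreover have "M *v a = Re z *\<^sub>R a - Im z *\<^sub>R b"
    using arg_cong[OF c, of Re] by (simp add: vec_eq_iff a_def b_def matrix_vector_mult_def cmat_def)
  moreover have "M *v b = Re z *\<^sub>R b + Im z *\<^sub>R a"
    using arg_cong[OF c, of Im] by (simp add: vec_eq_iff a_def b_def matrix_vector_mult_def cmat_def)
  ultimately show thesis by (rule that)
qed

lemma eigenvalues_c_from_real_pair:
  fixes M :: "real^'n^'n"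
  assumes "a \<noteq> 0 \<or> b \<noteq> 0" and "M *v a = y *\<^sub>R b" and "M *v b = - y *\<^sub>R a"
  shows "Complex 0 (- y) \<in> eigenvalues_c M"
proof -
  define v :: "complex^'n" where "v = (\<chi> i. Complex (a $ i) (b $ i))"
  have "v \<noteq> 0" using assms(1) by (auto simp: v_def vec_eq_iff complex_eq_iff)
  moreover have "cmat M *v v = Complex 0 (- y) *s v"
    using assms(2,3)
    by (simp add: vec_eq_iff complex_eq_iff matrix_vector_mult_def cmat_def v_def)
  ultimately show ?thesis unfolding eigenvalues_c_def by blast
qed

section \<open>The block structure of J2\<close>

lemma transpose_J2: "transpose (J2 :: real ^ ('mu::finite + 'mu) ^ ('mu + 'mu)) = - J2"
  by (auto simp: vec_eq_iff transpose_def J2_def split: sum.splits)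

lemma sum_UNIV_Plus:
  fixes f :: "'a::finite + 'b::finite \<Rightarrow> 'c::comm_monoid_add"
  shows "(\<Sum>c\<in>UNIV. f c) = (\<Sum>i\<in>UNIV. f (Inl i)) + (\<Sum>i\<in>UNIV. f (Inr i))"
  using sum.Plus[of "UNIV::'a::finite set" "UNIV::'b::finite set" f] by (simp add: comp_def)

lemma column_mult_J2_Inl:
  "column (Inl k) (X ** (J2::real ^ ('mu::finite + 'mu) ^ ('mu + 'mu))) = - column (Inr k) X"
  by (simp add: vec_eq_iff column_def matrix_matrix_mult_def J2_def sum_UNIV_Plus
      if_distrib[of "(*) _"] cong: if_cong)

lemma column_mult_J2_Inr:
  "column (Inr k) (X ** (J2::real ^ ('mu::finite + 'mu) ^ ('mu + 'mu))) = column (Inl k) X"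
  by (simp add: vec_eq_iff column_def matrix_matrix_mult_def J2_def sum_UNIV_Plus
      if_distrib[of "(*) _"] cong: if_cong)

lemma self_adjoint_mult_J2:
  assumes "antisym_mat Xi"
  shows "(Xi ** X ** (J2::real ^ ('mu::finite + 'mu) ^ ('mu + 'mu))) \<bullet> Y = X \<bullet> (Xi ** Y ** J2)"
proof -
  have "(Xi ** X ** J2) \<bullet> Y = (Xi ** X) \<bullet> (Y ** transpose J2)"
    by (rule inner_matrix_mult_right)
  also have "\<dots> = X \<bullet> (transpose Xi ** (Y ** transpose J2))"
    by (rule inner_matrix_mult_left)
  also have "\<dots> = X \<bullet> (Xi ** Y ** J2)"
    using assms unfolding antisym_mat_def
    by (simp add: transpose_J2 matrix_mult_uminus_left matrix_mult_uminus_right matrix_mul_assoc)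
  finally show ?thesis .
qed

definition pair_matrix :: "'mu \<Rightarrow> real^'q \<Rightarrow> real^'q \<Rightarrow> real^('mu::finite + 'mu)^'q" where
  "pair_matrix k u w = (\<chi> i c. if c = Inl k then u $ i else if c = Inr k then w $ i else 0)"

lemma column_pair_matrix_Inl: "column (Inl j) (pair_matrix k u w) = (if j = k then u else 0)"
  by (auto simp: pair_matrix_def column_def vec_eq_iff)

lemma column_pair_matrix_Inr: "column (Inr j) (pair_matrix k u w) = (if j = k then w else 0)"
  by (auto simp: pair_matrix_def column_def vec_eq_iff)

lemma inner_pair_matrix_mult:
  "pair_matrix k u w \<bullet> (A ** pair_matrix k u w) = u \<bullet> (A *v u) + w \<bullet> (A *v w)"
  by (simp add: inner_eq_sum_columns[of "pair_matrix k u w"] column_matrix_mult sum_UNIV_Plus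
      column_pair_matrix_Inl column_pair_matrix_Inr if_distrib[of "\<lambda>x. x \<bullet> _"] cong: if_cong)

lemma inner_pair_matrix_mult_J2:
  "pair_matrix k u w \<bullet> (A ** pair_matrix k u w ** J2) = w \<bullet> (A *v u) - u \<bullet> (A *v w)"
  by (simp add: inner_eq_sum_columns[of "pair_matrix k u w"] matrix_mul_assoc[symmetric]
      column_matrix_mult[of _ A] sum_UNIV_Plus column_mult_J2_Inl column_mult_J2_Inr
      column_pair_matrix_Inl column_pair_matrix_Inr matrix_vector_mult_uminus_right sum_negf
      if_distrib[of "\<lambda>x. x \<bullet> _"] cong: if_cong)

section \<open>The spectral radius of Q^-1 Xi\<close>

lemma eigenvalue_of_J2_eigenmatrix:
  fixes Q Xi M :: "real^'q^'q" and X :: "real^('mu::finite + 'mu)^'q"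
  assumes Q: "pos_def_mat Q" and QM: "Q ** M = Xi" and "X \<noteq> 0"
    and eigen: "Xi ** X ** J2 = lam *\<^sub>R (Q ** X)"
  shows "Complex 0 lam \<in> eigenvalues_c M"
proof -
  obtain c where "column c X \<noteq> 0"
    using \<open>X \<noteq> 0\<close> by (auto simp: vec_eq_iff column_def)
  then obtain k where k: "column (Inl k) X \<noteq> 0 \<or> column (Inr k) X \<noteq> 0"
    by (cases c) auto
  define u where "u = column (Inl k) X"
  define w where "w = column (Inr k) X"
  have "Xi *v u = lam *\<^sub>R (Q *v w)"
    using arg_cong[OF eigen, of "column (Inr k)"]
    unfolding column_mult_J2_Inr by (simp add: column_scaleR column_matrix_mult u_def w_def)
  then have "Q *v (M *v u) = Q *v (lam *\<^sub>R w)"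
    by (simp add: matrix_vector_mul_assoc QM matrix_vector_mult_scaleR)
  moreover have "Xi *v w = - lam *\<^sub>R (Q *v u)"
    using arg_cong[OF eigen, of "column (Inl k)"] unfolding column_mult_J2_Inl
    by (simp add: column_scaleR column_matrix_mult u_def w_def) (metis minus_minus)
  then have "Q *v (M *v w) = Q *v (- lam *\<^sub>R u)"
    by (simp add: matrix_vector_mul_assoc QM matrix_vector_mult_scaleR matrix_vector_mult_uminus_right)
  ultimately have "M *v u = lam *\<^sub>R w" "M *v w = - lam *\<^sub>R u"
    using pos_def_mat_cancel[OF Q] by blast+
  with k have "Complex 0 (- (- lam)) \<in> eigenvalues_c M"
    by (intro eigenvalues_c_from_real_pair) (auto simp: u_def w_def)
  then show ?thesis by simp
qed

lemma eigenvalue_imaginary: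
  fixes Q Xi M :: "real^'q^'q"
  assumes Q: "sym_mat Q" "pos_def_mat Q" and Xi: "antisym_mat Xi" and QM: "Q ** M = Xi"
    and "z \<in> eigenvalues_c M"
  obtains a b where "a \<noteq> 0 \<or> b \<noteq> 0" "Re z = 0"
    "Xi *v a = - Im z *\<^sub>R (Q *v b)" "Xi *v b = Im z *\<^sub>R (Q *v a)"
proof -
  obtain a b where ab: "a \<noteq> 0 \<or> b \<noteq> 0"
    and Ma: "M *v a = Re z *\<^sub>R a - Im z *\<^sub>R b" and Mb: "M *v b = Re z *\<^sub>R b + Im z *\<^sub>R a"
    using eigenvalues_c_real_parts[OF \<open>z \<in> eigenvalues_c M\<close>] by blast
  have Xa: "Xi *v a = Re z *\<^sub>R (Q *v a) - Im z *\<^sub>R (Q *v b)"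
    using arg_cong[OF Ma, of "(*v) Q"] by (simp add: matrix_vector_mul_assoc QM algebra_simps)
  have Xb: "Xi *v b = Re z *\<^sub>R (Q *v b) + Im z *\<^sub>R (Q *v a)"
    using arg_cong[OF Mb, of "(*v) Q"] by (simp add: matrix_vector_mul_assoc QM algebra_simps)
  have "a \<bullet> (Xi *v a) + b \<bullet> (Xi *v b) = 0"
    using antisym_mat_inner_self[OF Xi] by simp
  then have "Re z * (a \<bullet> (Q *v a) + b \<bullet> (Q *v b)) = 0"
    using sym_mat_inner_commute[OF Q(1), of a b]
    by (simp add: Xa Xb inner_diff_right inner_add_right algebra_simps)
  moreover have "a \<bullet> (Q *v a) + b \<bullet> (Q *v b) > 0"
    using pos_def_mat_inner_add_pos[OF Q(2) ab] .
  ultimately have "Re z = 0" by simp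
  with ab Xa Xb show thesis by (intro that) simp_all
qed

lemma cmod_eigenvalue_le_rayleigh_max:
  fixes Q Xi M :: "real^'q^'q"
  assumes Q: "sym_mat Q" "pos_def_mat Q" and Xi: "antisym_mat Xi" and QM: "Q ** M = Xi"
    and "z \<in> eigenvalues_c M"
    and bound: "\<And>Y :: real^('mu::finite + 'mu)^'q. Y \<bullet> (Xi ** Y ** J2) \<le> lam * (Y \<bullet> (Q ** Y))"
  shows "cmod z \<le> lam"
proof -
  obtain a b where ab: "a \<noteq> 0 \<or> b \<noteq> 0" and "Re z = 0"
    and Xa: "Xi *v a = - Im z *\<^sub>R (Q *v b)" and Xb: "Xi *v b = Im z *\<^sub>R (Q *v a)"
    using eigenvalue_imaginary[OF Q Xi QM \<open>z \<in> eigenvalues_c M\<close>] by blast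
  define q where "q = a \<bullet> (Q *v a) + b \<bullet> (Q *v b)"
  have "q > 0"
    unfolding q_def using pos_def_mat_inner_add_pos[OF Q(2) ab] .
  fix k :: 'mu
  have "Im z * q \<le> lam * q"
    using bound[of "pair_matrix k b a"]
    by (simp add: inner_pair_matrix_mult inner_pair_matrix_mult_J2 Xa Xb q_def algebra_simps)
  moreover have "- Im z * q \<le> lam * q"
    using bound[of "pair_matrix k a b"]
    by (simp add: inner_pair_matrix_mult inner_pair_matrix_mult_J2 Xa Xb q_def algebra_simps)
  ultimately have "\<bar>Im z\<bar> \<le> lam"
    using \<open>q > 0\<close> by (metis abs_le_iff mult_minus_left mult_le_cancel_right_pos)
  then show ?thesis using \<open>Re z = 0\<close> by (simp add: cmod_def)
qed

lemma spec_rad_eq_rayleigh_max: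
  fixes Q Xi M :: "real^'q^'q" and X0 :: "real^('mu::finite + 'mu)^'q"
  assumes Q: "sym_mat Q" "pos_def_mat Q" and Xi: "antisym_mat Xi" and QM: "Q ** M = Xi"
    and "X0 \<noteq> 0" and eigen: "Xi ** X0 ** J2 = lam *\<^sub>R (Q ** X0)"
    and bound: "\<And>Y :: real^('mu + 'mu)^'q. Y \<bullet> (Xi ** Y ** J2) \<le> lam * (Y \<bullet> (Q ** Y))"
  shows "spec_rad M = lam"
proof -
  have "finite (eigenvalues_c M)"
    unfolding eigenvalues_c_def by (rule finite_eigenvalues)
  moreover have le: "cmod z \<le> lam" if "z \<in> eigenvalues_c M" for z
    using cmod_eigenvalue_le_rayleigh_max[OF Q Xi QM that bound] .
  moreover have "Complex 0 lam \<in> eigenvalues_c M"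
    using eigenvalue_of_J2_eigenmatrix[OF Q(2) QM \<open>X0 \<noteq> 0\<close> eigen] .
  moreover from le[OF this] have "cmod (Complex 0 lam) = lam"
    by (simp add: cmod_def)
  ultimately show ?thesis
    unfolding spec_rad_def by (intro Max_eqI) (auto, metis image_eqI)
qed

theorem mainTheorem9:
  fixes Q22 Xi :: "real ^ 'q ^ 'q"
  assumes "sym_mat Q22" and "pos_def_mat Q22" and "antisym_mat Xi"
  defines "L \<equiv> (\<lambda>X :: real ^ ('mu::finite + 'mu) ^ 'q. Q22 ** X - Xi ** X ** J2)"
  shows "linear L \<and> self_adjoint_frob L \<and>
         (pos_def_op L \<longleftrightarrow> spec_rad (matrix_inv Q22 ** Xi) < 1)"
proof -
  define P where "P = (\<lambda>X :: real ^ ('mu + 'mu) ^ 'q. Q22 ** X)"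
  define T where "T = (\<lambda>X :: real ^ ('mu + 'mu) ^ 'q. Xi ** X ** J2)"
  have L: "L = (\<lambda>X. P X - T X)" unfolding L_def P_def T_def ..
  have "linear P" "linear T"
    unfolding P_def T_def using linear_matrix_mult_left linear_matrix_mult_right
    by (blast, rule linear_compose[unfolded o_def])
  have saP: "P X \<bullet> Y = X \<bullet> P Y" for X Y
    using assms(1) unfolding P_def sym_mat_def by (simp add: inner_matrix_mult_left)
  have saT: "T X \<bullet> Y = X \<bullet> T Y" for X Y
    unfolding T_def by (rule self_adjoint_mult_J2[OF assms(3)])
  have pdP: "X \<bullet> P X > 0" if "X \<noteq> 0" for X
    unfolding P_def using pos_def_mat_inner_mult_pos[OF assms(2) that] .
  obtain X0 lam where "X0 \<noteq> 0" "T X0 = lam *\<^sub>R P X0" and bound: "\<And>Y. Y \<bullet> T Y \<le> lam * (Y \<bullet> P Y)"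
    using generalized_rayleigh_max[OF \<open>linear P\<close> \<open>linear T\<close> saP saT pdP] by blast
  have "Q22 ** (matrix_inv Q22 ** Xi) = Xi"
    by (simp add: matrix_mul_assoc pos_def_mat_mult_matrix_inv[OF assms(2)])
  then have "spec_rad (matrix_inv Q22 ** Xi) = lam"
    using spec_rad_eq_rayleigh_max[OF assms(1-3)] \<open>X0 \<noteq> 0\<close> \<open>T X0 = lam *\<^sub>R P X0\<close> bound
    unfolding P_def T_def by blast
  moreover have "pos_def_op L \<longleftrightarrow> lam < 1"
    unfolding pos_def_op_def frob_eq_inner L
    using rayleigh_max_lt_1_iff[OF pdP \<open>X0 \<noteq> 0\<close> \<open>T X0 = lam *\<^sub>R P X0\<close> bound] .
  moreover have "linear L"
    unfolding L using \<open>linear P\<close> \<open>linear T\<close> by (rule linear_compose_sub)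
  moreover have "self_adjoint_frob L"
    unfolding self_adjoint_frob_def frob_eq_inner L by (simp add: inner_diff_left inner_diff_right saP saT)
  ultimately show ?thesis by simp
qed

end
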